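(* Let $d\ge3$ and $h\ge1$. The Hall $(d-1)$-subgroup of the sandpile group $G(d,h)$ is cyclic of order $(d-1)^h$.
   Context: Let $\mathcal{T}(d,h)$ be the rooted tree in which the root $0$ has $d$ children, every vertex at distance $1,\dots,h-1$ from the root has $d-1$ children, and the vertices at distance $h$ are leaves. Let $V$ be its vertex set, $A$ its adjacency matrix, $\Delta := dI-A$, and $\Lambda\subset\mathbb{Z}^V$ the lattice spanned by the rows of $\Delta$. Then $G(d,h):=\mathbb{Z}^V/\Lambda$. For a finite group $G$, a subgroup $H$ is a Hall subgroup if $\gcd(|H|,|G:H|)=1$; it is a Hall $t$-subgroup if moreover $|H|$ and $t$ have the same set of prime divisors. A finite abelian group has a unique Hall $t$-subgroup for each $t$ dividing its order (here the Hall $(d-1)$-subgroup is the product of the Sylow $p$-subgroups for primes $p\mid d-1$). *)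

theory Defs
  imports "HOL-Algebra.Algebra"
begin

text \<open>Vertices of the tree T(d,h): a vertex is encoded by the list of child indices
  along the path from the root [].\<close>
definition tree_vertices :: "nat \<Rightarrow> nat \<Rightarrow> nat list set" where
  "tree_vertices d h = {xs. length xs \<le> h \<and>
     (\<forall>i<length xs. xs ! i < (if i = 0 then d else d - 1))}"

definition tree_adj :: "nat \<Rightarrow> nat \<Rightarrow> nat list \<Rightarrow> nat list \<Rightarrow> int" where
  "tree_adj d h u v =
     (if u \<in> tree_vertices d h \<and> v \<in> tree_vertices d h \<and>
         ((\<exists>i. v = u @ [i]) \<or> (\<exists>i. u = v @ [i])) then 1 else 0)"

definition tree_Delta :: "nat \<Rightarrow> nat \<Rightarrow> nat list \<Rightarrow> nat list \<Rightarrow> int" where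
  "tree_Delta d h u v =
     (if u \<in> tree_vertices d h \<and> v \<in> tree_vertices d h
      then (if u = v then int d else 0) - tree_adj d h u v else 0)"

definition ZV :: "'a set \<Rightarrow> ('a \<Rightarrow> int) monoid" where
  "ZV V = \<lparr>carrier = {x. \<forall>v. v \<notin> V \<longrightarrow> x v = 0},
           monoid.mult = (\<lambda>x y v. x v + y v), monoid.one = (\<lambda>_. 0)\<rparr>"

definition tree_lattice :: "nat \<Rightarrow> nat \<Rightarrow> (nat list \<Rightarrow> int) set" where
  "tree_lattice d h = {x. \<exists>c :: nat list \<Rightarrow> int.
      x = (\<lambda>v. \<Sum>u\<in>tree_vertices d h. c u * tree_Delta d h u v)}"

definition sandpile_group :: "nat \<Rightarrow> nat \<Rightarrow> (nat list \<Rightarrow> int) set monoid" where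
  "sandpile_group d h = ZV (tree_vertices d h) Mod tree_lattice d h"

definition hall_subgroup :: "('a, 'b) monoid_scheme \<Rightarrow> nat \<Rightarrow> 'a set \<Rightarrow> bool" where
  "hall_subgroup G t H \<longleftrightarrow> finite (carrier G) \<and> subgroup H G \<and>
     coprime (card H) (card (rcosets\<^bsub>G\<^esub> H)) \<and>
     {p. Factorial_Ring.prime (p::nat) \<and> p dvd card H} = {p. Factorial_Ring.prime (p::nat) \<and> p dvd t}"

end

theory Submission
  imports Defs
begin

text \<open>Put \<open>q = d - 1\<close> and weight each vertex \<open>v\<close> by
  \<open>w(v) = 1 + q + \<dots> + q^(h - |v|)\<close>. This vector is harmonic for \<open>\<Delta>\<close>
  except at the root, where \<open>(\<Delta> w)(root) = d q^h\<close>. Pairing with \<open>w\<close>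
  therefore maps \<open>\<Lambda>\<close> into \<open>q^h \<int>\<close>, so the class \<open>z\<close> of \<open>d e_root\<close>
  has order at least \<open>q^h\<close>. Read row by row from the leaves upwards, the
  same identity gives \<open>w(parent v) e_v \<equiv> w(v) e_(parent v)\<close> modulo \<open>\<Lambda>\<close>
  and \<open>d q^h e_root \<in> \<Lambda>\<close>; hence \<open>z\<close> has order exactly \<open>q^h\<close>, and since
  all weights are prime to \<open>q\<close>, every element has a multiple prime to \<open>q\<close>
  inside \<open>\<langle>z\<rangle>\<close>. In a finite abelian group this makes \<open>\<langle>z\<rangle>\<close> the
  unique Hall \<open>q\<close>-subgroup.\<close>

section \<open>Hall subgroups generated by a single element\<close>

lemma coprime_if_prime_divisors_dvd:
  fixes m n q :: nat
  assumes "coprime m q" and "\<And>p. Factorial_Ring.prime p \<Longrightarrow> p dvd n \<Longrightarrow> p dvd q"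
  shows "coprime m n"
proof (rule coprimeI)
  fix c assume "c dvd m" "c dvd n"
  show "is_unit c"
  proof (rule ccontr)
    assume "\<not> is_unit c"
    then obtain p where p: "Factorial_Ring.prime p" "p dvd c" using prime_factor_nat by auto
    then have "p dvd m" "p dvd q" using \<open>c dvd m\<close> \<open>c dvd n\<close> assms(2) by auto
    with assms(1) p(1) show False by (meson coprime_common_divisor not_prime_unit)
  qed
qed

lemma (in group) mem_subgroup_if_coprime_pows:
  fixes a b :: nat
  assumes H: "subgroup H G" and x: "x \<in> carrier G"
    and "x [^] a \<in> H" and "x [^] b = \<one>" and "coprime a b"
  shows "x \<in> H"
proof -
  obtain u v :: int where uv: "u * int a + v * int b = 1"
    using \<open>coprime a b\<close> bezout_int[of "int a" "int b"] by (auto simp: coprime_iff_gcd_eq_1)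
  have "x = x [^] (int a * u + int b * v)" using uv x by (simp add: mult.commute)
  also have "\<dots> = (x [^] a) [^] u \<otimes> (x [^] b) [^] v"
    using x by (simp add: int_pow_mult int_pow_pow flip: int_pow_int)
  also have "\<dots> = (x [^] a) [^] u" using \<open>x [^] b = \<one>\<close> x by simp
  finally show ?thesis using subgroup_int_pow_closed[OF H \<open>x [^] a \<in> H\<close>] by metis
qed

lemma (in group) pow_card_subgroup_eq_one:
  assumes "subgroup H G" "finite H" "x \<in> H"
  shows "x [^] card H = \<one>"
proof -
  interpret H: group "G\<lparr>carrier := H\<rparr>" using assms(1) by (rule subgroup_imp_group)
  have "x [^]\<^bsub>G\<lparr>carrier := H\<rparr>\<^esub> order (G\<lparr>carrier := H\<rparr>) = \<one>"
    using H.pow_order_eq_1 assms(3) by simp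
  then show ?thesis by (simp add: order_def nat_pow_consistent[symmetric])
qed

lemma (in normal) pow_card_rcosets_mem:
  assumes "finite (carrier G)" "x \<in> carrier G"
  shows "x [^] card (rcosets H) \<in> H"
proof -
  have "H #> x \<in> carrier (G Mod H)" using assms(2) by (auto simp: carrier_FactGroup)
  then have "(H #> x) [^]\<^bsub>G Mod H\<^esub> order (G Mod H) = H"
    using group.pow_order_eq_1[OF factorgroup_is_group] by simp
  moreover have "order (G Mod H) = card (rcosets H)" by (simp add: order_def FactGroup_def)
  ultimately have "H #> (x [^] card (rcosets H)) = H" by (simp add: FactGroup_pow[OF assms(2)])
  then show ?thesis using coset_join1 assms(2) subgroup_axioms by blast
qed

locale hall_generator = comm_group G for G (structure) +
  fixes z :: 'a and q h :: nat
  assumes finite_carrier: "finite (carrier G)"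
    and generator_closed: "z \<in> carrier G"
    and ord_generator: "ord z = q ^ h"
    and exponent_pos: "h \<ge> 1"
    and coprime_pow_in_generate: "x \<in> carrier G \<Longrightarrow> \<exists>m. coprime m q \<and> x [^] m \<in> generate G {z}"
begin

lemma subgroup_generate: "subgroup (generate G {z}) G"
  using generate_is_subgroup generator_closed by simp

lemma card_generate: "card (generate G {z}) = q ^ h"
  using generate_pow_card[OF generator_closed] ord_generator by simp

lemma prime_dvd_card_generate_iff:
  "Factorial_Ring.prime p \<Longrightarrow> p dvd card (generate G {z}) \<longleftrightarrow> p dvd q" for p :: nat using exponent_pos by (simp add: card_generate prime_dvd_power_iff)

lemma subgroup_subset_generate:
  assumes K: "subgroup K G"
    and prime_divisors: "\<And>p. Factorial_Ring.prime p \<Longrightarrow> p dvd card K \<Longrightarrow> p dvd q"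
  shows "K \<subseteq> generate G {z}"
proof
  fix x assume "x \<in> K"
  have finite_K: "finite K" using finite_subset[OF subgroup.subset[OF K] finite_carrier] .
  have x: "x \<in> carrier G" using subgroup.mem_carrier[OF K \<open>x \<in> K\<close>] .
  obtain m where "coprime m q" and "x [^] m \<in> generate G {z}"
    using coprime_pow_in_generate[OF x] by blast
  moreover have "x [^] card K = \<one>" using pow_card_subgroup_eq_one[OF K finite_K \<open>x \<in> K\<close>] .
  moreover have "coprime m (card K)"
    using coprime_if_prime_divisors_dvd[OF \<open>coprime m q\<close> prime_divisors] .
  ultimately show "x \<in> generate G {z}"
    using mem_subgroup_if_coprime_pows[OF subgroup_generate x] by blast
qed

text \<open>A prime \<open>p\<close> dividing both \<open>q\<close> and the index would contradict the fact that a
  Sylow \<open>p\<close>-subgroup, lying inside \<open>\<langle>z\<rangle>\<close>, already carries the full \<open>p\<close>-part of \<open>|G|\<close>.\<close>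
lemma coprime_card_index_generate:
  "coprime (card (generate G {z})) (card (rcosets (generate G {z})))"
proof (rule ccontr)
  let ?Z = "generate G {z}"
  assume "\<not> coprime (card ?Z) (card (rcosets ?Z))"
  then have "gcd (card ?Z) (card (rcosets ?Z)) \<noteq> 1" by (simp add: coprime_iff_gcd_eq_1)
  then obtain p where p: "Factorial_Ring.prime p" "p dvd gcd (card ?Z) (card (rcosets ?Z))"
    using prime_factor_nat by blast
  then have p_dvd_q: "p dvd q" and p_dvd_index: "p dvd card (rcosets ?Z)"
    using prime_dvd_card_generate_iff by auto
  define a where "a = multiplicity p (order G)"
  have "p ^ a dvd order G" unfolding a_def by (rule multiplicity_dvd)
  then obtain m where "order G = p ^ a * m" by (rule dvdE)
  then obtain P where P: "subgroup P G" "card P = p ^ a"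
    using sylow_thm[OF p(1) is_group _ finite_carrier] by blast
  have "P \<subseteq> ?Z"
  proof (rule subgroup_subset_generate[OF P(1)])
    fix r :: nat assume r: "Factorial_Ring.prime r" "r dvd card P"
    then have "r dvd p" using P(2) prime_dvd_power by metis
    then show "r dvd q" using r(1) p(1) p_dvd_q primes_dvd_imp_eq by metis
  qed
  then have "subgroup P (G\<lparr>carrier := ?Z\<rparr>)" by (rule subgroup_incl[OF P(1) subgroup_generate])
  then have "card (rcosets\<^bsub>G\<lparr>carrier := ?Z\<rparr>\<^esub> P) * card P = card ?Z"
    using group.lagrange[OF subgroup_imp_group[OF subgroup_generate]] by (simp add: order_def)
  then have "p ^ a dvd card ?Z" using P(2) by (metis dvd_triv_right)
  then have "p ^ a * p dvd card ?Z * card (rcosets ?Z)"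
    using p_dvd_index by (rule mult_dvd_mono)
  then have "p ^ Suc a dvd order G" using lagrange[OF subgroup_generate] by (simp add: mult.commute)
  moreover have "order G \<noteq> 0" using finite_carrier order_gt_0_iff_finite by auto
  ultimately have "Suc a \<le> a"
    unfolding a_def using power_dvd_iff_le_multiplicity p(1) not_prime_unit by blast
  then show False by simp
qed

lemma hall_subgroup_generate: "hall_subgroup G q (generate G {z})"
  unfolding hall_subgroup_def
  using finite_carrier subgroup_generate coprime_card_index_generate prime_dvd_card_generate_iff
  by auto

lemma hall_subgroup_eq_generate:
  assumes "hall_subgroup G q H"
  shows "H = generate G {z}"
proof
  have H: "subgroup H G" and coprime_index: "coprime (card H) (card (rcosets H))"
    and prime_divisors: "\<And>p. Factorial_Ring.prime p \<Longrightarrow> p dvd card H \<longleftrightarrow> p dvd q"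
    using assms unfolding hall_subgroup_def by auto
  show "H \<subseteq> generate G {z}" using subgroup_subset_generate[OF H] prime_divisors by blast
  have "z [^] card (rcosets H) \<in> H"
    using normal.pow_card_rcosets_mem[OF _ finite_carrier generator_closed] H
    by (simp add: normal_iff_subgroup)
  moreover have "z [^] (q ^ h) = \<one>" using ord_generator generator_closed pow_ord_eq_1 by metis
  moreover have "coprime (card (rcosets H)) (q ^ h)"
  proof (rule coprime_if_prime_divisors_dvd)
    show "coprime (card (rcosets H)) (card H)" using coprime_index by (simp add: coprime_commute)
    show "p dvd card H" if "Factorial_Ring.prime p" "p dvd q ^ h" for p
      using that prime_divisors prime_dvd_power by blast
  qed
  ultimately have "z \<in> H" using mem_subgroup_if_coprime_pows[OF H generator_closed] by blast
  then show "generate G {z} \<subseteq> H" using generate_subgroup_incl[OF _ H] by blast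
qed

theorem hall_subgroup_unique_cyclic:
  "(\<exists>H. hall_subgroup G q H) \<and>
   (\<forall>H. hall_subgroup G q H \<longrightarrow> cyclic_group (G\<lparr>carrier := H\<rparr>) \<and> card H = q ^ h)"
proof -
  have "cyclic_group (G\<lparr>carrier := generate G {z}\<rparr>)"
    using cyclic_group_generated[of z] generator_closed by (simp add: subgroup_generated_def)
  then show ?thesis using hall_subgroup_generate hall_subgroup_eq_generate card_generate by blast
qed

end

section \<open>The free abelian group \<open>\<int>^V\<close>\<close>

definition unit_vec :: "'a \<Rightarrow> 'a \<Rightarrow> int" where
  "unit_vec u w = (if w = u then 1 else 0)"

lemma sum_unit_vec_mult:
  assumes "finite V" "u \<in> V"
  shows "(\<Sum>v\<in>V. unit_vec u v * g v) = g u"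
proof -
  have "(\<Sum>v\<in>V. unit_vec u v * g v) = (\<Sum>v\<in>V. if v = u then g v else 0)"
    by (rule sum.cong) (auto simp: unit_vec_def)
  then show ?thesis using assms by simp
qed

lemma unit_vec_expansion:
  assumes "finite V" "y \<in> carrier (ZV V)"
  shows "(\<Sum>v\<in>V. y v * unit_vec v w) = y w"
proof -
  have "(\<Sum>v\<in>V. y v * unit_vec v w) = (\<Sum>v\<in>V. if w = v then y v else 0)"
    by (rule sum.cong) (auto simp: unit_vec_def)
  then show ?thesis using assms by (simp add: ZV_def)
qed

lemma ZV_comm_group: "comm_group (ZV V)"
proof (rule comm_groupI)
  fix x assume "x \<in> carrier (ZV V)"
  then show "\<exists>y\<in>carrier (ZV V). y \<otimes>\<^bsub>ZV V\<^esub> x = \<one>\<^bsub>ZV V\<^esub>"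
    by (intro bexI[of _ "\<lambda>v. - x v"]) (auto simp: ZV_def)
qed (auto simp: ZV_def)

lemma ZV_nat_pow: "x [^]\<^bsub>ZV V\<^esub> (n::nat) = (\<lambda>v. int n * x v)"
  by (induction n) (auto simp: ZV_def algebra_simps)

lemma ZV_int_pow:
  assumes x: "x \<in> carrier (ZV V)"
  shows "x [^]\<^bsub>ZV V\<^esub> (k::int) = (\<lambda>v. k * x v)"
proof -
  interpret comm_group "ZV V" by (rule ZV_comm_group)
  show ?thesis
  proof (cases k rule: int_cases2)
    case (nonneg n)
    then show ?thesis by (simp add: int_pow_int ZV_nat_pow)
  next
    case (nonpos n)
    have "x [^]\<^bsub>ZV V\<^esub> k = inv\<^bsub>ZV V\<^esub> (\<lambda>v. int n * x v)"
      using nonpos x by (simp add: int_pow_neg_int ZV_nat_pow)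
    also have "\<dots> = (\<lambda>v. k * x v)"
      using nonpos x by (intro inv_equality) (auto simp: ZV_def algebra_simps)
    finally show ?thesis .
  qed
qed

context
  fixes V :: "'a set" and K :: "('a \<Rightarrow> int) set"
  assumes K: "subgroup K (ZV V)"
begin

interpretation comm_group "ZV V" by (rule ZV_comm_group)

lemma ZV_rcos_eq:
  assumes "y \<in> carrier (ZV V)" "y' \<in> carrier (ZV V)" "(\<lambda>v. y v - y' v) \<in> K"
  shows "K #>\<^bsub>ZV V\<^esub> y = K #>\<^bsub>ZV V\<^esub> y'"
proof -
  have "(\<lambda>v. y v - y' v) \<otimes>\<^bsub>ZV V\<^esub> y' \<in> K #>\<^bsub>ZV V\<^esub> y'"
    using rcosI[OF assms(3) subgroup.subset[OF K] assms(2)] .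
  then have "y \<in> K #>\<^bsub>ZV V\<^esub> y'" by (simp add: ZV_def)
  then show ?thesis using repr_independence[OF _ assms(2) K] by simp
qed

lemma ZV_rcos_eq_subgroup_iff:
  "y \<in> carrier (ZV V) \<Longrightarrow> K #>\<^bsub>ZV V\<^esub> y = K \<longleftrightarrow> y \<in> K"
  using coset_join1 coset_join2 K by blast

lemma ZV_FactGroup_nat_pow:
  "y \<in> carrier (ZV V) \<Longrightarrow>
     (K #>\<^bsub>ZV V\<^esub> y) [^]\<^bsub>ZV V Mod K\<^esub> (n::nat) = K #>\<^bsub>ZV V\<^esub> (\<lambda>v. int n * y v)"
  using normal.FactGroup_pow[of K "ZV V"] K by (simp add: normal_iff_subgroup ZV_nat_pow)

lemma ZV_FactGroup_int_pow:
  "y \<in> carrier (ZV V) \<Longrightarrow>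
     (K #>\<^bsub>ZV V\<^esub> y) [^]\<^bsub>ZV V Mod K\<^esub> (k::int) = K #>\<^bsub>ZV V\<^esub> (\<lambda>v. k * y v)"
  using normal.FactGroup_int_pow[of K "ZV V"] K by (simp add: normal_iff_subgroup ZV_int_pow)

end

section \<open>Lattices spanned by the rows of a matrix\<close>

definition row_span :: "'a set \<Rightarrow> ('a \<Rightarrow> 'b \<Rightarrow> int) \<Rightarrow> ('b \<Rightarrow> int) set" where
  "row_span V M = {x. \<exists>c. x = (\<lambda>v. \<Sum>u\<in>V. c u * M u v)}"

lemma row_span_zero: "(\<lambda>v. 0) \<in> row_span V M"
  unfolding row_span_def by (intro CollectI exI[of _ "\<lambda>u. 0"]) simp

lemma row_span_add:
  assumes "x \<in> row_span V M" "y \<in> row_span V M"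
  shows "(\<lambda>v. x v + y v) \<in> row_span V M"
proof -
  obtain a b where "x = (\<lambda>v. \<Sum>u\<in>V. a u * M u v)" "y = (\<lambda>v. \<Sum>u\<in>V. b u * M u v)"
    using assms unfolding row_span_def by blast
  then show ?thesis unfolding row_span_def
    by (intro CollectI exI[of _ "\<lambda>u. a u + b u"]) (simp add: sum.distrib distrib_right)
qed

lemma row_span_smult:
  assumes "x \<in> row_span V M"
  shows "(\<lambda>v. k * x v) \<in> row_span V M"
proof -
  obtain a where "x = (\<lambda>v. \<Sum>u\<in>V. a u * M u v)" using assms unfolding row_span_def by blast
  then show ?thesis unfolding row_span_def
    by (intro CollectI exI[of _ "\<lambda>u. k * a u"]) (simp add: sum_distrib_left mult.assoc)
qed

lemma row_span_sum:
  "finite I \<Longrightarrow> (\<And>i. i \<in> I \<Longrightarrow> f i \<in> row_span V M) \<Longrightarrow> (\<lambda>v. \<Sum>i\<in>I. f i v) \<in> row_span V M"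
  by (induction I rule: finite_induct) (auto simp: row_span_zero row_span_add)

lemma row_span_row: "finite V \<Longrightarrow> u \<in> V \<Longrightarrow> M u \<in> row_span V M"
  unfolding row_span_def by (intro CollectI exI[of _ "unit_vec u"]) (simp add: sum_unit_vec_mult)

lemma subgroup_row_span:
  assumes "\<And>u v. v \<notin> V \<Longrightarrow> M u v = 0"
  shows "subgroup (row_span V M) (ZV V)"
proof -
  interpret comm_group "ZV V" by (rule ZV_comm_group)
  have carrier: "row_span V M \<subseteq> carrier (ZV V)"
    using assms by (auto simp: row_span_def ZV_def)
  show ?thesis
  proof (rule subgroupI)
    show "row_span V M \<noteq> {}" using row_span_zero by blast
    show "inv\<^bsub>ZV V\<^esub> x \<in> row_span V M" if x: "x \<in> row_span V M" for x
    proof -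
      have x_carrier: "x \<in> carrier (ZV V)" using x carrier by blast
      then have "inv\<^bsub>ZV V\<^esub> x = x [^]\<^bsub>ZV V\<^esub> (- 1 :: int)"
        by (simp add: int_pow_neg int_pow_1)
      then show ?thesis using ZV_int_pow[OF x_carrier] row_span_smult[OF x, of "- 1"] by simp
    qed
    show "x \<otimes>\<^bsub>ZV V\<^esub> y \<in> row_span V M" if "x \<in> row_span V M" "y \<in> row_span V M" for x y
      using row_span_add[OF that] by (simp add: ZV_def)
  qed (use carrier in auto)
qed

lemma row_span_weighted_sum_dvd:
  assumes "finite V" "\<And>u. u \<in> V \<Longrightarrow> m dvd (\<Sum>v\<in>V. M u v * g v)" "x \<in> row_span V M"
  shows "m dvd (\<Sum>v\<in>V. x v * g v)"
proof -
  obtain c where x: "x = (\<lambda>v. \<Sum>u\<in>V. c u * M u v)" using assms(3) unfolding row_span_def by blast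
  have "(\<Sum>v\<in>V. x v * g v) = (\<Sum>v\<in>V. \<Sum>u\<in>V. c u * (M u v * g v))"
    unfolding x by (simp add: sum_distrib_right mult.assoc)
  also have "\<dots> = (\<Sum>u\<in>V. c u * (\<Sum>v\<in>V. M u v * g v))"
    by (subst sum.swap) (simp add: sum_distrib_left)
  finally show ?thesis using assms(2) by (simp add: dvd_sum)
qed

lemma row_span_coprime_multiple_congruence:
  assumes "finite V" "y \<in> carrier (ZV V)"
    and "\<And>v. v \<in> V \<Longrightarrow> \<exists>m t. m > 0 \<and> coprime m q \<and> (\<lambda>w. m * unit_vec v w - t * r w) \<in> row_span V M"
  shows "\<exists>m t. m > 0 \<and> coprime m q \<and> (\<lambda>w. m * y w - t * r w) \<in> row_span V M"
proof -
  have "\<exists>m t. m > 0 \<and> coprime m q \<and> (\<lambda>w. m * (\<Sum>v\<in>I. y v * unit_vec v w) - t * r w) \<in> row_span V M"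
    if "finite I" "I \<subseteq> V" for I
    using that
  proof (induction I rule: finite_induct)
    case empty
    show ?case using row_span_zero by (intro exI[of _ 1] exI[of _ 0]) simp
  next
    case (insert v I)
    obtain m1 t1 where 1: "m1 > 0" "coprime m1 q" "(\<lambda>w. m1 * unit_vec v w - t1 * r w) \<in> row_span V M"
      using assms(3) insert.prems by blast
    obtain m2 t2 where 2: "m2 > 0" "coprime m2 q"
      "(\<lambda>w. m2 * (\<Sum>v\<in>I. y v * unit_vec v w) - t2 * r w) \<in> row_span V M"
      using insert.IH insert.prems by auto
    have "(\<lambda>w. m2 * y v * (m1 * unit_vec v w - t1 * r w)
              + m1 * (m2 * (\<Sum>v\<in>I. y v * unit_vec v w) - t2 * r w)) \<in> row_span V M"
      by (intro row_span_add row_span_smult 1 2)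
    also have "(\<lambda>w. m2 * y v * (m1 * unit_vec v w - t1 * r w)
              + m1 * (m2 * (\<Sum>v\<in>I. y v * unit_vec v w) - t2 * r w))
      = (\<lambda>w. m1 * m2 * (\<Sum>v\<in>insert v I. y v * unit_vec v w) - (m2 * y v * t1 + m1 * t2) * r w)"
      using insert.hyps by (simp add: fun_eq_iff algebra_simps)
    finally show ?case using 1 2 by (intro exI[of _ "m1 * m2"] exI[of _ "m2 * y v * t1 + m1 * t2"]) auto
  qed
  from this[OF assms(1) order_refl] show ?thesis
    by (simp add: unit_vec_expansion[OF assms(1,2)])
qed

lemma finite_ZV_quotient_row_span:
  assumes V: "finite V" and M: "\<And>u v. v \<notin> V \<Longrightarrow> M u v = 0"
    and torsion: "\<And>v. v \<in> V \<Longrightarrow> \<exists>l>0. (\<lambda>w. l * unit_vec v w) \<in> row_span V M"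
  shows "finite (carrier (ZV V Mod row_span V M))"
proof -
  let ?K = "row_span V M"
  obtain l where l: "\<And>v. v \<in> V \<Longrightarrow> l v > 0 \<and> (\<lambda>w. l v * unit_vec v w) \<in> ?K"
    using torsion by metis
  define reduce where "reduce = (\<lambda>y w. if w \<in> V then y w mod l w else 0)"
  have "carrier (ZV V Mod ?K) \<subseteq> (\<lambda>y. ?K #>\<^bsub>ZV V\<^esub> reduce y) ` (\<Pi>\<^sub>E v\<in>V. {0..<l v})"
  proof
    fix c assume "c \<in> carrier (ZV V Mod ?K)"
    then obtain y where y: "y \<in> carrier (ZV V)" and c: "c = ?K #>\<^bsub>ZV V\<^esub> y"
      unfolding carrier_FactGroup by blast
    have "(\<lambda>w. \<Sum>v\<in>V. (y v div l v) * (l v * unit_vec v w)) \<in> ?K"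
      by (intro row_span_sum V) (use l row_span_smult in blast)
    also have "(\<lambda>w. \<Sum>v\<in>V. (y v div l v) * (l v * unit_vec v w)) = (\<lambda>w. y w - reduce y w)"
    proof
      fix w
      have "(\<Sum>v\<in>V. (y v div l v) * (l v * unit_vec v w)) = (if w \<in> V then y w div l w * l w else 0)"
        using V by (simp add: unit_vec_def if_distrib sum.delta cong: if_cong)
      then show "(\<Sum>v\<in>V. (y v div l v) * (l v * unit_vec v w)) = y w - reduce y w"
        using y by (auto simp: reduce_def ZV_def minus_mod_eq_div_mult)
    qed
    finally have "c = ?K #>\<^bsub>ZV V\<^esub> reduce y"
      unfolding c using y by (intro ZV_rcos_eq subgroup_row_span M) (auto simp: reduce_def ZV_def)
    moreover have "restrict (reduce y) V \<in> (\<Pi>\<^sub>E v\<in>V. {0..<l v})"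
      using l by (auto simp: reduce_def)
    moreover have "reduce (restrict (reduce y) V) = reduce y"
      by (auto simp: reduce_def fun_eq_iff)
    ultimately show "c \<in> (\<lambda>y. ?K #>\<^bsub>ZV V\<^esub> reduce y) ` (\<Pi>\<^sub>E v\<in>V. {0..<l v})"
      by (metis image_eqI)
  qed
  moreover have "finite (\<Pi>\<^sub>E v\<in>V. {0..<l v})" using V by (simp add: finite_PiE)
  ultimately show ?thesis using finite_subset by blast
qed

section \<open>The tree and its Laplacian\<close>

definition num_children :: "nat \<Rightarrow> nat \<Rightarrow> nat list \<Rightarrow> nat" where
  "num_children d h u = (if length u < h then if u = [] then d else d - 1 else 0)"

lemma Nil_in_tree_vertices [simp]: "[] \<in> tree_vertices d h"
  by (simp add: tree_vertices_def)

lemma length_le_if_in_tree_vertices: "u \<in> tree_vertices d h \<Longrightarrow> length u \<le> h"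
  by (simp add: tree_vertices_def)

lemma butlast_in_tree_vertices: "u \<in> tree_vertices d h \<Longrightarrow> butlast u \<in> tree_vertices d h"
  unfolding tree_vertices_def by (auto simp: nth_butlast)

lemma snoc_in_tree_vertices_iff:
  "u @ [i] \<in> tree_vertices d h \<longleftrightarrow> u \<in> tree_vertices d h \<and> i < num_children d h u"
proof
  assume ui: "u @ [i] \<in> tree_vertices d h"
  then have "u \<in> tree_vertices d h" using butlast_in_tree_vertices by fastforce
  moreover have "length u < h" "(u @ [i]) ! length u < (if length u = 0 then d else d - 1)"
    using ui unfolding tree_vertices_def by auto
  ultimately show "u \<in> tree_vertices d h \<and> i < num_children d h u"
    by (auto simp: num_children_def)
next
  assume "u \<in> tree_vertices d h \<and> i < num_children d h u"
  then show "u @ [i] \<in> tree_vertices d h"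
    unfolding tree_vertices_def num_children_def
    by (auto simp: nth_append split: if_splits)
qed

lemma finite_tree_vertices: "finite (tree_vertices d h)"
proof -
  have "tree_vertices d h \<subseteq> {xs. set xs \<subseteq> {0..<d} \<and> length xs \<le> h}"
    unfolding tree_vertices_def by (force simp: in_set_conv_nth split: if_splits)
  then show ?thesis using finite_lists_length_le[of "{0..<d}" h] finite_subset by blast
qed

lemma tree_lattice_eq_row_span: "tree_lattice d h = row_span (tree_vertices d h) (tree_Delta d h)"
  by (simp add: tree_lattice_def row_span_def)

lemma tree_Delta_eq_0: "v \<notin> tree_vertices d h \<Longrightarrow> tree_Delta d h u v = 0"
  by (simp add: tree_Delta_def)

lemma subgroup_tree_lattice: "subgroup (tree_lattice d h) (ZV (tree_vertices d h))"
  unfolding tree_lattice_eq_row_span by (rule subgroup_row_span) (rule tree_Delta_eq_0)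

lemma sum_unit_vec_snoc:
  "(\<Sum>i<(n::nat). unit_vec (u @ [i]) w) = (if \<exists>i<n. w = u @ [i] then 1 else 0)"
proof (cases "\<exists>i<n. w = u @ [i]")
  case True
  then obtain j where "j < n" "w = u @ [j]" by blast
  then have "(\<Sum>i<n. unit_vec (u @ [i]) w) = (\<Sum>i<n. if i = j then 1 else 0)"
    by (intro sum.cong) (auto simp: unit_vec_def)
  also have "\<dots> = 1" using \<open>j < n\<close> by simp
  finally show ?thesis using True by simp
qed (auto simp: unit_vec_def)

lemma tree_Delta_eq:
  assumes u: "u \<in> tree_vertices d h"
  shows "tree_Delta d h u w = int d * unit_vec u w - (if u \<noteq> [] then unit_vec (butlast u) w else 0)
           - (\<Sum>i<num_children d h u. unit_vec (u @ [i]) w)"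
proof (cases "w \<in> tree_vertices d h")
  case False
  then have "w \<noteq> u" "u \<noteq> [] \<Longrightarrow> w \<noteq> butlast u" "\<not> (\<exists>i<num_children d h u. w = u @ [i])"
    using u butlast_in_tree_vertices snoc_in_tree_vertices_iff by blast+
  then show ?thesis using False by (simp add: tree_Delta_def sum_unit_vec_snoc unit_vec_def)
next
  case True
  have "(\<exists>i. w = u @ [i]) \<longleftrightarrow> (\<exists>i<num_children d h u. w = u @ [i])"
    using True snoc_in_tree_vertices_iff by blast
  moreover have "(\<exists>i. u = w @ [i]) \<longleftrightarrow> u \<noteq> [] \<and> w = butlast u"
    by (metis append_butlast_last_id butlast_snoc snoc_eq_iff_butlast)
  moreover have "\<not> ((\<exists>i. w = u @ [i]) \<and> (\<exists>i. u = w @ [i]))" "u = w \<Longrightarrow> \<not> (\<exists>i. w = u @ [i])"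
    by auto
  ultimately show ?thesis
    using True u unfolding tree_Delta_def tree_adj_def sum_unit_vec_snoc unit_vec_def
    by (auto split: if_splits)
qed

lemma tree_Delta_sum:
  assumes u: "u \<in> tree_vertices d h"
  shows "(\<Sum>v\<in>tree_vertices d h. tree_Delta d h u v * g v)
     = int d * g u - (if u \<noteq> [] then g (butlast u) else 0) - (\<Sum>i<num_children d h u. g (u @ [i]))"
proof -
  let ?V = "tree_vertices d h"
  have "(\<Sum>v\<in>?V. tree_Delta d h u v * g v)
     = int d * (\<Sum>v\<in>?V. unit_vec u v * g v)
        - (if u \<noteq> [] then (\<Sum>v\<in>?V. unit_vec (butlast u) v * g v) else 0)
        - (\<Sum>i<num_children d h u. \<Sum>v\<in>?V. unit_vec (u @ [i]) v * g v)"
    by (simp add: tree_Delta_eq[OF u] algebra_simps sum_subtractf sum_distrib_left sum_distrib_right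
        sum.swap[of _ "{..<num_children d h u}"])
  also have "\<dots> = int d * g u - (if u \<noteq> [] then g (butlast u) else 0) - (\<Sum>i<num_children d h u. g (u @ [i]))"
    using u by (simp add: sum_unit_vec_mult finite_tree_vertices butlast_in_tree_vertices
        snoc_in_tree_vertices_iff)
  finally show ?thesis .
qed

section \<open>Harmonic weights\<close>

definition geom_sum :: "int \<Rightarrow> nat \<Rightarrow> int" where
  "geom_sum q n = (\<Sum>i\<le>n. q ^ i)"

lemma geom_sum_0 [simp]: "geom_sum q 0 = 1"
  by (simp add: geom_sum_def)

lemma geom_sum_Suc: "geom_sum q (Suc n) = geom_sum q n + q ^ Suc n"
  by (simp add: geom_sum_def)

lemma geom_sum_Suc_left: "geom_sum q (Suc n) = 1 + q * geom_sum q n"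
  unfolding geom_sum_def sum.atMost_Suc_shift by (simp add: sum_distrib_left)

lemma geom_sum_pos: "q \<ge> 0 \<Longrightarrow> geom_sum q n > 0"
  by (induction n) (auto simp: geom_sum_Suc_left intro!: add_pos_nonneg)

lemma coprime_one_plus_mult: "coprime (1 + q * x) (q :: int)"
proof (rule coprimeI)
  fix c assume "c dvd 1 + q * x" "c dvd q"
  then show "is_unit c" by (simp add: dvd_add_left_iff)
qed

lemma coprime_geom_sum: "coprime (geom_sum q n) q"
  by (cases n) (simp_all add: geom_sum_Suc_left coprime_one_plus_mult)

definition tree_weight :: "nat \<Rightarrow> nat \<Rightarrow> nat list \<Rightarrow> int" where
  "tree_weight d h v = geom_sum (int d - 1) (h - length v)"

lemma d_pos_if_nonroot: "u \<in> tree_vertices d h \<Longrightarrow> u \<noteq> [] \<Longrightarrow> 0 < d"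
  by (cases u) (auto simp: tree_vertices_def)

lemma tree_Delta_weight:
  assumes u: "u \<in> tree_vertices d h"
  shows "(\<Sum>v\<in>tree_vertices d h. tree_Delta d h u v * tree_weight d h v)
           = (if u = [] then int d * (int d - 1) ^ h else 0)"
proof -
  define q where "q = int d - 1"
  note row = tree_Delta_sum[OF u, of "tree_weight d h"]
  have u_le: "length u \<le> h" using u by (rule length_le_if_in_tree_vertices)
  consider "u = []" | "u \<noteq> []" "length u < h" | "u \<noteq> []" "length u = h"
    using u_le by linarith
  then show ?thesis
  proof cases
    case 1
    then show ?thesis unfolding row
      by (cases h) (simp_all add: tree_weight_def num_children_def geom_sum_Suc algebra_simps)
  next
    case 2
    then obtain k where k: "h - length u = Suc k" by (metis Suc_diff_Suc)
    have "int (d - 1) = q" "int d = q + 1" using d_pos_if_nonroot[OF u 2(1)] by (simp_all add: q_def)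
    moreover have "h - length (butlast u) = Suc (Suc k)" "h - Suc (length u) = k"
      using k \<open>u \<noteq> []\<close> by (cases u; auto)+
    ultimately show ?thesis unfolding row
      using 2 k by (simp add: tree_weight_def num_children_def geom_sum_Suc_left algebra_simps)
  next
    case 3
    then have "h - length (butlast u) = Suc 0" by (cases u rule: rev_cases) auto
    then show ?thesis unfolding row
      using 3 by (simp add: tree_weight_def num_children_def geom_sum_Suc_left)
  qed
qed

definition edge_relation :: "nat \<Rightarrow> nat \<Rightarrow> nat list \<Rightarrow> nat list \<Rightarrow> int" where
  "edge_relation d h v x =
     tree_weight d h (butlast v) * unit_vec v x - tree_weight d h v * unit_vec (butlast v) x"

lemma weighted_row_plus_child_edges:
  assumes u: "u \<in> tree_vertices d h"
  shows "tree_weight d h u * tree_Delta d h u x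
           + (\<Sum>i<num_children d h u. edge_relation d h (u @ [i]) x)
         = (if u = [] then int d * (int d - 1) ^ h * unit_vec [] x else edge_relation d h u x)"
proof -
  let ?w = "tree_weight d h" and ?n = "num_children d h u"
  have children: "(\<Sum>i<?n. ?w (u @ [i])) = int d * ?w u - (if u \<noteq> [] then ?w (butlast u) else 0)
      - (if u = [] then int d * (int d - 1) ^ h else 0)"
    using tree_Delta_weight[OF u] tree_Delta_sum[OF u] by simp
  have "(\<Sum>i<?n. edge_relation d h (u @ [i]) x)
      = ?w u * (\<Sum>i<?n. unit_vec (u @ [i]) x) - (\<Sum>i<?n. ?w (u @ [i])) * unit_vec u x"
    by (simp add: edge_relation_def sum_subtractf sum_distrib_left sum_distrib_right mult.commute)
  then show ?thesis
    unfolding tree_Delta_eq[OF u] children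
    by (cases "u = []") (simp_all add: edge_relation_def algebra_simps)
qed

lemma weighted_row_plus_child_edges_in_tree_lattice:
  assumes u: "u \<in> tree_vertices d h"
    and edges: "\<And>i. i < num_children d h u \<Longrightarrow> edge_relation d h (u @ [i]) \<in> tree_lattice d h"
  shows "(\<lambda>x. if u = [] then int d * (int d - 1) ^ h * unit_vec [] x else edge_relation d h u x)
           \<in> tree_lattice d h"
proof -
  have "(\<lambda>x. tree_weight d h u * tree_Delta d h u x
           + (\<Sum>i<num_children d h u. edge_relation d h (u @ [i]) x)) \<in> tree_lattice d h"
    using edges u finite_tree_vertices unfolding tree_lattice_eq_row_span
    by (intro row_span_add row_span_smult row_span_row row_span_sum) auto
  then show ?thesis by (simp only: weighted_row_plus_child_edges[OF u])
qed

lemma edge_relation_in_tree_lattice: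
  "v \<in> tree_vertices d h \<Longrightarrow> v \<noteq> [] \<Longrightarrow> edge_relation d h v \<in> tree_lattice d h"
proof (induction "h - length v" arbitrary: v rule: less_induct)
  case less
  have "edge_relation d h (v @ [i]) \<in> tree_lattice d h" if "i < num_children d h v" for i
  proof (rule less.hyps)
    show "v @ [i] \<in> tree_vertices d h" using less.prems that snoc_in_tree_vertices_iff by blast
    then show "h - length (v @ [i]) < h - length v"
      using length_le_if_in_tree_vertices by fastforce
  qed simp
  then show ?case
    using weighted_row_plus_child_edges_in_tree_lattice[OF less.prems(1)] less.prems(2) by simp
qed

lemma root_relation_in_tree_lattice:
  "(\<lambda>x. int d * (int d - 1) ^ h * unit_vec [] x) \<in> tree_lattice d h"
  using weighted_row_plus_child_edges_in_tree_lattice[of "[]"]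
    edge_relation_in_tree_lattice snoc_in_tree_vertices_iff[of "[]"]
  by simp

lemma unit_vec_congruent_root:
  "v \<in> tree_vertices d h \<Longrightarrow> \<exists>m t. m > 0 \<and> coprime m (int d - 1) \<and>
     (\<lambda>x. m * unit_vec v x - t * unit_vec [] x) \<in> tree_lattice d h"
proof (induction v rule: rev_induct)
  case Nil
  show ?case
    using row_span_zero by (intro exI[of _ 1] exI[of _ 1]) (simp add: tree_lattice_eq_row_span)
next
  case (snoc i u)
  let ?w = "tree_weight d h"
  obtain m t where m: "m > 0" "coprime m (int d - 1)"
    "(\<lambda>x. m * unit_vec u x - t * unit_vec [] x) \<in> tree_lattice d h"
    using snoc butlast_in_tree_vertices by fastforce
  have "(\<lambda>x. m * edge_relation d h (u @ [i]) x + ?w (u @ [i]) * (m * unit_vec u x - t * unit_vec [] x))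
          \<in> tree_lattice d h"
    using m(3) edge_relation_in_tree_lattice[OF snoc.prems] unfolding tree_lattice_eq_row_span
    by (intro row_span_add row_span_smult) auto
  also have "(\<lambda>x. m * edge_relation d h (u @ [i]) x + ?w (u @ [i]) * (m * unit_vec u x - t * unit_vec [] x))
      = (\<lambda>x. (m * ?w u) * unit_vec (u @ [i]) x - (?w (u @ [i]) * t) * unit_vec [] x)"
    by (simp add: fun_eq_iff edge_relation_def algebra_simps)
  finally show ?case
    using m d_pos_if_nonroot[OF snoc.prems]
    by (intro exI[of _ "m * ?w u"] exI[of _ "?w (u @ [i]) * t"])
       (simp add: tree_weight_def geom_sum_pos coprime_geom_sum)
qed

lemma unit_vec_torsion:
  assumes "2 \<le> d" "v \<in> tree_vertices d h"
  shows "\<exists>l>0. (\<lambda>x. l * unit_vec v x) \<in> tree_lattice d h"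
proof -
  define r where "r = int d * (int d - 1) ^ h"
  obtain m t where m: "m > 0" "(\<lambda>x. m * unit_vec v x - t * unit_vec [] x) \<in> tree_lattice d h"
    using unit_vec_congruent_root[OF assms(2)] by blast
  have "(\<lambda>x. r * unit_vec [] x) \<in> tree_lattice d h"
    using root_relation_in_tree_lattice unfolding r_def .
  then have "(\<lambda>x. r * (m * unit_vec v x - t * unit_vec [] x) + t * (r * unit_vec [] x)) \<in> tree_lattice d h"
    using m(2) unfolding tree_lattice_eq_row_span
    by (intro row_span_add[OF row_span_smult row_span_smult])
  moreover have "r * m > 0" using assms(1) m(1) by (simp add: r_def)
  ultimately show ?thesis by (intro exI[of _ "r * m"]) (simp add: algebra_simps)
qed

section \<open>The sandpile group\<close>

lemma comm_group_sandpile_group: "comm_group (sandpile_group d h)"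
  unfolding sandpile_group_def
  by (rule comm_group.abelian_FactGroup[OF ZV_comm_group subgroup_tree_lattice])

lemma finite_sandpile_group: "2 \<le> d \<Longrightarrow> finite (carrier (sandpile_group d h))"
  using finite_ZV_quotient_row_span[OF finite_tree_vertices tree_Delta_eq_0] unit_vec_torsion
  by (simp add: sandpile_group_def tree_lattice_eq_row_span)

lemma root_multiple_in_tree_lattice_iff:
  assumes "1 \<le> d"
  shows "(\<lambda>x. k * (int d * unit_vec [] x)) \<in> tree_lattice d h \<longleftrightarrow> (int d - 1) ^ h dvd k"
proof
  let ?q = "int d - 1"
  assume "(\<lambda>x. k * (int d * unit_vec [] x)) \<in> tree_lattice d h"
  then have "?q ^ h dvd (\<Sum>v\<in>tree_vertices d h. k * (int d * unit_vec [] v) * tree_weight d h v)"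
    unfolding tree_lattice_eq_row_span
    by (rule row_span_weighted_sum_dvd[OF finite_tree_vertices, rotated]) (simp add: tree_Delta_weight)
  also have "(\<Sum>v\<in>tree_vertices d h. k * (int d * unit_vec [] v) * tree_weight d h v)
      = k * (int d * geom_sum ?q h)"
    using sum_unit_vec_mult[OF finite_tree_vertices Nil_in_tree_vertices,
        of "\<lambda>v. k * int d * tree_weight d h v" d h]
    by (simp add: tree_weight_def algebra_simps)
  finally have "?q ^ h dvd k * (int d * geom_sum ?q h)" .
  moreover have "coprime (int d * geom_sum ?q h) (?q ^ h)"
    using coprime_geom_sum coprime_one_plus_mult[of ?q 1] by simp
  ultimately show "?q ^ h dvd k" using coprime_dvd_mult_left_iff coprime_commute by blast
next
  assume "(int d - 1) ^ h dvd k"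
  then obtain c where "k = (int d - 1) ^ h * c" by (rule dvdE)
  then show "(\<lambda>x. k * (int d * unit_vec [] x)) \<in> tree_lattice d h"
    using row_span_smult[OF root_relation_in_tree_lattice[unfolded tree_lattice_eq_row_span], of c]
    by (simp add: tree_lattice_eq_row_span algebra_simps)
qed

text \<open>The class of \<open>d e_root\<close> rather than of \<open>e_root\<close>: the relation killing the root,
  \<open>root_relation_in_tree_lattice\<close>, comes with the factor \<open>d\<close>.\<close>
definition sandpile_generator :: "nat \<Rightarrow> nat \<Rightarrow> (nat list \<Rightarrow> int) set" where
  "sandpile_generator d h = tree_lattice d h #>\<^bsub>ZV (tree_vertices d h)\<^esub> (\<lambda>x. int d * unit_vec [] x)"

lemma scaled_root_in_ZV: "(\<lambda>x. k * unit_vec [] x) \<in> carrier (ZV (tree_vertices d h))"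
  by (simp add: ZV_def unit_vec_def)

lemma sandpile_generator_closed: "sandpile_generator d h \<in> carrier (sandpile_group d h)"
  unfolding sandpile_generator_def sandpile_group_def carrier_FactGroup
  using scaled_root_in_ZV by blast

lemma ord_sandpile_generator:
  assumes "1 \<le> d"
  shows "group.ord (sandpile_group d h) (sandpile_generator d h) = (d - 1) ^ h"
proof -
  interpret comm_group "sandpile_group d h" by (rule comm_group_sandpile_group)
  have "sandpile_generator d h [^]\<^bsub>sandpile_group d h\<^esub> n = \<one>\<^bsub>sandpile_group d h\<^esub>
      \<longleftrightarrow> (d - 1) ^ h dvd n" for n :: nat
  proof -
    have "sandpile_generator d h [^]\<^bsub>sandpile_group d h\<^esub> n = \<one>\<^bsub>sandpile_group d h\<^esub>
        \<longleftrightarrow> (\<lambda>x. int n * (int d * unit_vec [] x)) \<in> tree_lattice d h"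
      unfolding sandpile_generator_def sandpile_group_def
      using ZV_FactGroup_nat_pow[OF subgroup_tree_lattice scaled_root_in_ZV[of "int d"]]
        ZV_rcos_eq_subgroup_iff[OF subgroup_tree_lattice scaled_root_in_ZV[of "int n * int d"]]
      by (simp add: mult.assoc)
    also have "\<dots> \<longleftrightarrow> (d - 1) ^ h dvd n"
      using root_multiple_in_tree_lattice_iff[OF assms] assms
      by (simp add: of_nat_diff flip: int_dvd_int_iff)
    finally show ?thesis .
  qed
  then show ?thesis using ord_unique sandpile_generator_closed by blast
qed

lemma sandpile_pow_coprime_in_generate:
  assumes "1 \<le> d" "c \<in> carrier (sandpile_group d h)"
  shows "\<exists>m. coprime m (d - 1) \<and>
           c [^]\<^bsub>sandpile_group d h\<^esub> m \<in> generate (sandpile_group d h) {sandpile_generator d h}"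
proof -
  let ?V = "tree_vertices d h" and ?L = "tree_lattice d h" and ?G = "sandpile_group d h"
  interpret comm_group ?G by (rule comm_group_sandpile_group)
  obtain y where y: "y \<in> carrier (ZV ?V)" and c: "c = ?L #>\<^bsub>ZV ?V\<^esub> y"
    using assms(2) unfolding sandpile_group_def carrier_FactGroup by blast
  obtain m t where m: "m > 0" "coprime m (int d - 1)" "(\<lambda>x. m * y x - t * unit_vec [] x) \<in> ?L"
    using row_span_coprime_multiple_congruence[OF finite_tree_vertices y] unit_vec_congruent_root
    unfolding tree_lattice_eq_row_span by blast
  define n where "n = nat m * d"
  have "c [^]\<^bsub>?G\<^esub> n = ?L #>\<^bsub>ZV ?V\<^esub> (\<lambda>x. int n * y x)"
    unfolding c sandpile_group_def using ZV_FactGroup_nat_pow[OF subgroup_tree_lattice y] .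
  also have "\<dots> = ?L #>\<^bsub>ZV ?V\<^esub> (\<lambda>x. t * (int d * unit_vec [] x))"
  proof (rule ZV_rcos_eq[OF subgroup_tree_lattice])
    show "(\<lambda>x. int n * y x) \<in> carrier (ZV ?V)" using y by (simp add: ZV_def)
    show "(\<lambda>x. t * (int d * unit_vec [] x)) \<in> carrier (ZV ?V)"
      using scaled_root_in_ZV[of "t * int d"] by (simp add: mult.assoc)
    have "(\<lambda>x. int d * (m * y x - t * unit_vec [] x)) \<in> ?L"
      using row_span_smult m(3) unfolding tree_lattice_eq_row_span by blast
    then show "(\<lambda>x. int n * y x - t * (int d * unit_vec [] x)) \<in> ?L"
      using m(1) by (simp add: n_def algebra_simps)
  qed
  also have "\<dots> = sandpile_generator d h [^]\<^bsub>?G\<^esub> t"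
    unfolding sandpile_generator_def sandpile_group_def
    using ZV_FactGroup_int_pow[OF subgroup_tree_lattice scaled_root_in_ZV] by simp
  finally have "c [^]\<^bsub>?G\<^esub> n \<in> generate ?G {sandpile_generator d h}"
    using generate_pow[OF sandpile_generator_closed] by blast
  moreover have "coprime n (d - 1)"
  proof -
    have "coprime (nat m) (d - 1)"
      using m assms(1) by (simp add: coprime_int_iff[symmetric] of_nat_diff)
    moreover have "coprime d (d - 1)" using assms(1) coprime_add_one_left[of "d - 1"] by simp
    ultimately show ?thesis by (simp add: n_def)
  qed
  ultimately show ?thesis by blast
qed

theorem theorem2p8:
  fixes d h :: nat
  assumes "d \<ge> 3" and "h \<ge> 1"
  shows "(\<exists>H. hall_subgroup (sandpile_group d h) (d - 1) H) \<and>
         (\<forall>H. hall_subgroup (sandpile_group d h) (d - 1) H \<longrightarrow>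
              cyclic_group ((sandpile_group d h)\<lparr>carrier := H\<rparr>) \<and> card H = (d - 1) ^ h)"
proof -
  interpret hall_generator "sandpile_group d h" "sandpile_generator d h" "d - 1" h
  proof (rule hall_generator.intro[OF comm_group_sandpile_group], unfold_locales)
    show "finite (carrier (sandpile_group d h))" using assms(1) by (simp add: finite_sandpile_group)
    show "group.ord (sandpile_group d h) (sandpile_generator d h) = (d - 1) ^ h"
      using assms(1) by (simp add: ord_sandpile_generator)
  qed (use assms sandpile_generator_closed sandpile_pow_coprime_in_generate in auto)
  show ?thesis by (rule hall_subgroup_unique_cyclic)
qed

end
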